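(* Let $m\ge1$, let $p$ be a prime, and let $\lambda\vdash n$ be a partition with $2$-core of size $\binom{m+1}{2}$. If $w_p(\lambda)=t\le\lfloor\frac{m+1}{2}\rfloor$, then $n\ge N_t:=tp-t(2(m-t)+1)+\binom{m+1}{2}$.
   Context: Partitions $\lambda=(\lambda_1\ge\dots\ge\lambda_r\ge0)$ may have zero parts; the degree sequence is $n_\lambda=(\lambda_r,\lambda_{r-1}+1,\dots,\lambda_1+r-1)$. For an integer $q\ge1$, removing a $q$-hook from $\lambda$ means replacing an entry $a$ of $n_\lambda$ by $a-q$, where $a-q\ge0$ and $a-q\notin n_\lambda$, and taking the partition of the same length with the resulting degree sequence (equivalently removing a connected border strip of $q$ cells from the Young diagram). The $q$-weight $w_q(\lambda)$ is the maximal number of $q$-hooks that can be removed successively. Removing $2$-hooks until impossible yields the $2$-core, which is a staircase $(m,m-1,\dots,1)$ padded with zeros, of size $\binom{m+1}{2}$. *)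

theory Defs
  imports Main "HOL-Computational_Algebra.Primes"
begin

text \<open>A partition (possibly with zero parts) is a weakly decreasing list of naturals
  (lambda_1 >= ... >= lambda_r >= 0); its size is the sum of its parts.\<close>
definition is_partition :: "nat list \<Rightarrow> bool" where
  "is_partition lam \<longleftrightarrow> sorted_wrt (\<ge>) lam"

text \<open>Degree sequence (beta-set): the set of numbers lambda_i + (r - i), i = 1..r
  (0-indexed here: lam!i + (r - 1 - i)).\<close>
definition degseq :: "nat list \<Rightarrow> nat set" where
  "degseq lam = {lam ! i + (length lam - 1 - i) | i. i < length lam}"

text \<open>mu is obtained from lam by removing a q-hook: replace an entry a of the degree
  sequence by a - q (with a - q >= 0 not already present), keeping the same length.\<close>
definition remove_hook :: "nat \<Rightarrow> nat list \<Rightarrow> nat list \<Rightarrow> bool" where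
  "remove_hook q lam mu \<longleftrightarrow> is_partition mu \<and> length mu = length lam \<and>
     (\<exists>a\<in>degseq lam. q \<le> a \<and> a - q \<notin> degseq lam \<and>
        degseq mu = insert (a - q) (degseq lam - {a}))"

definition weight :: "nat \<Rightarrow> nat list \<Rightarrow> nat" where
  "weight q lam = (GREATEST k. \<exists>mu. (remove_hook q ^^ k) lam mu)"

definition two_core_size :: "nat list \<Rightarrow> nat \<Rightarrow> bool" where
  "two_core_size lam s \<longleftrightarrow> (\<exists>mu. (remove_hook 2)\<^sup>*\<^sup>* lam mu \<and>
      \<not> (\<exists>nu. remove_hook 2 mu nu) \<and> sum_list mu = s)"

end

theory Submission
  imports Defs
begin

(* Let k be the charge of the degree sequence of a partition: the number of odd minus the
   number of even entries. The even entries are at least 0, 2, 4, ... and the odd ones at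
   least 1, 3, 5, ..., which gives |lambda| >= k(k+1)/2, with equality when the degree
   sequence is closed under x -> x - 2, i.e. for 2-cores. Removing a 2-hook preserves k,
   removing any hook changes it by at most 2. So a 2-core of size m(m+1)/2 forces
   k in {m, -m-1}; after removing t p-hooks the charge lies outside the interval
   (-(m-2t)-1, m-2t), the remaining partition has size at least (m-2t)(m-2t+1)/2, and adding
   back the tp removed cells gives the bound. *)

lemma sorted_wrt_less_nth_gap:
  fixes s :: "nat list"
  assumes "sorted_wrt (<) s" "i \<le> j" "j < length s"
  shows "s ! i + (j - i) \<le> s ! j"
  using assms(2,3)
proof (induction j rule: dec_induct)
  case base
  then show ?case by simp
next
  case (step j)
  have "s ! j < s ! Suc j"
    using assms(1) step.prems by (simp add: sorted_wrt_nth_less)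
  then show ?case
    using step by simp
qed

lemma double_sum_lessThan_id: "2 * (\<Sum>i<n. i) + n = n * (n :: nat)"
  by (induction n) (auto simp: algebra_simps)

lemma sum_lessThan_card_le:
  fixes A :: "nat set"
  assumes "finite A"
  shows "(\<Sum>i<card A. i) \<le> \<Sum>A"
proof -
  obtain s where s: "sorted_wrt (<) s" "set s = A" "length s = card A"
    using finite_set_strict_sorted[OF assms] by blast
  have "(\<Sum>i<card A. i) \<le> (\<Sum>i<card A. s ! i)"
    using sorted_wrt_less_nth_gap[OF s(1), of 0] s(3) by (intro sum_mono) fastforce
  also have "\<dots> = sum_list s"
    by (simp add: sum_list_sum_nth atLeast0LessThan s(3))
  also have "\<dots> = \<Sum>A"
    using s(1,2) by (simp add: distinct_sum_list_conv_Sum strict_sorted_iff)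
  finally show ?thesis .
qed

lemma down_closed_eq_lessThan_card:
  fixes A :: "nat set"
  assumes "finite A" "\<And>x y. x \<in> A \<Longrightarrow> y \<le> x \<Longrightarrow> y \<in> A"
  shows "A = {..<card A}"
proof -
  have "A \<subseteq> {..<card A}"
  proof
    fix x assume "x \<in> A"
    then have "{..x} \<subseteq> A" using assms(2) by auto
    then have "card {..x} \<le> card A" using assms(1) card_mono by blast
    then show "x \<in> {..<card A}" by simp
  qed
  then show ?thesis by (metis card_lessThan card_subset_eq finite_lessThan)
qed

lemma card_square_le_sum:
  fixes A :: "nat set"
  assumes "finite A"
  shows "card A * card A \<le> 2 * \<Sum>A + card A"
  using sum_lessThan_card_le[OF assms] double_sum_lessThan_id[of "card A"] by linarith

lemma down_closed_card_square_eq_sum: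
  fixes A :: "nat set"
  assumes "finite A" "\<And>x y. x \<in> A \<Longrightarrow> y \<le> x \<Longrightarrow> y \<in> A"
  shows "card A * card A = 2 * \<Sum>A + card A"
  using double_sum_lessThan_id[of "card A"] down_closed_eq_lessThan_card[OF assms] by simp

lemma sum_parity_split:
  fixes X :: "nat set"
  assumes "finite X"
  shows "finite {i. 2 * i \<in> X}" "finite {i. 2 * i + 1 \<in> X}"
    and "sum f X = (\<Sum>i | 2 * i \<in> X. f (2 * i)) + (\<Sum>i | 2 * i + 1 \<in> X. f (2 * i + 1))"
proof -
  let ?A = "{i. 2 * i \<in> X}" and ?B = "{i. 2 * i + 1 \<in> X}"
  have inj: "inj (\<lambda>i::nat. 2 * i)" "inj (\<lambda>i::nat. 2 * i + 1)"
    by (simp_all add: inj_on_def)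
  show fin: "finite ?A" "finite ?B"
    using finite_vimageI[OF assms inj(1)] finite_vimageI[OF assms inj(2)] by (simp_all add: vimage_def)
  have "X = (\<lambda>i. 2 * i) ` ?A \<union> (\<lambda>i. 2 * i + 1) ` ?B"
  proof (intro equalityI subsetI)
    fix x assume "x \<in> X"
    then show "x \<in> (\<lambda>i. 2 * i) ` ?A \<union> (\<lambda>i. 2 * i + 1) ` ?B"
      by (cases "even x") (auto elim!: evenE oddE)
  qed auto
  moreover have "(\<lambda>i. 2 * i) ` ?A \<inter> (\<lambda>i. 2 * i + 1) ` ?B = {}"
    by auto presburger
  ultimately have "sum f X = sum f ((\<lambda>i. 2 * i) ` ?A) + sum f ((\<lambda>i. 2 * i + 1) ` ?B)"
    using fin by (metis finite_imageI sum.union_disjoint)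
  then show "sum f X = (\<Sum>i | 2 * i \<in> X. f (2 * i)) + (\<Sum>i | 2 * i + 1 \<in> X. f (2 * i + 1))"
    by (simp add: sum.reindex inj_on_def)
qed

definition charge :: "nat set \<Rightarrow> int" where
  "charge X = (\<Sum>x\<in>X. if odd x then 1 else -1)"

lemma charge_replace:
  assumes "finite X" "a \<in> X" "b \<notin> X"
  shows "charge (insert b (X - {a})) =
    charge X - (if odd a then 1 else -1) + (if odd b then 1 else -1)"
proof -
  let ?s = "\<lambda>x::nat. if odd x then 1 else -1 :: int"
  have "charge X = ?s a + sum ?s (X - {a})"
    unfolding charge_def by (rule sum.remove[OF assms(1,2)])
  moreover have "charge (insert b (X - {a})) = ?s b + sum ?s (X - {a})"
    unfolding charge_def using assms(1,3) by (simp only: sum.insert finite_Diff Diff_iff simp_thms)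
  ultimately show ?thesis
    by linarith
qed

lemma down_closed_by_two:
  fixes X :: "nat set"
  assumes "\<forall>x\<in>X. 2 \<le> x \<longrightarrow> x - 2 \<in> X" "c + 2 * d \<in> X"
  shows "c \<in> X"
  using assms(2)
proof (induction d)
  case (Suc d)
  moreover have "2 \<le> c + 2 * Suc d"
    by simp
  ultimately have "c + 2 * Suc d - 2 \<in> X"
    using assms(1) by blast
  then show ?case
    using Suc.IH by simp
qed simp

(* For X the degree sequence of lambda, 2 * sum X + card X - card X ^ 2 = 2 * |lambda|. *)
lemma charge_card_sum_bound:
  fixes X :: "nat set"
  assumes "finite X"
  shows "charge X * (charge X + 1) + int (card X) ^ 2 \<le> 2 * int (\<Sum>X) + int (card X)"
    and "\<forall>x\<in>X. 2 \<le> x \<longrightarrow> x - 2 \<in> X \<Longrightarrow>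
      charge X * (charge X + 1) + int (card X) ^ 2 = 2 * int (\<Sum>X) + int (card X)"
proof -
  define A where "A = {i. 2 * i \<in> X}"
  define B where "B = {i. 2 * i + 1 \<in> X}"
  note split = sum_parity_split[OF assms, folded A_def B_def]
  have card: "card X = card A + card B"
    using split(3)[of "\<lambda>_. 1 :: nat"] by simp
  have sum: "\<Sum>X = 2 * \<Sum>A + 2 * \<Sum>B + card B"
    using split(3)[of "\<lambda>x. x"] by (simp add: sum_Suc sum_distrib_left)
  have charge: "charge X = int (card B) - int (card A)"
    using split(3)[of "\<lambda>x. if odd x then 1 else -1 :: int"] by (simp add: charge_def)
  have expand: "charge X * (charge X + 1) + int (card X) ^ 2 =
      2 * int (card A * card A) + 2 * int (card B * card B) + int (card B) - int (card A)"
    unfolding charge card by (simp add: power2_eq_square algebra_simps)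
  show "charge X * (charge X + 1) + int (card X) ^ 2 \<le> 2 * int (\<Sum>X) + int (card X)"
    using of_nat_mono[OF card_square_le_sum[OF split(1)], where 'a=int]
      of_nat_mono[OF card_square_le_sum[OF split(2)], where 'a=int]
    unfolding expand unfolding sum card by simp
  assume closed: "\<forall>x\<in>X. 2 \<le> x \<longrightarrow> x - 2 \<in> X"
  have square_A: "card A * card A = 2 * \<Sum>A + card A"
  proof (rule down_closed_card_square_eq_sum[OF split(1)])
    fix x y assume "x \<in> A" "y \<le> x"
    then have "2 * y + 2 * (x - y) \<in> X"
      by (simp add: A_def flip: distrib_left)
    then show "y \<in> A" using down_closed_by_two[OF closed] by (simp add: A_def)
  qed
  have square_B: "card B * card B = 2 * \<Sum>B + card B"
  proof (rule down_closed_card_square_eq_sum[OF split(2)])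
    fix x y assume "x \<in> B" "y \<le> x"
    then have "(2 * y + 1) + 2 * (x - y) \<in> X"
      by (simp add: B_def add.commute add.left_commute flip: distrib_left)
    then show "y \<in> B" using down_closed_by_two[OF closed] by (simp add: B_def)
  qed
  show "charge X * (charge X + 1) + int (card X) ^ 2 = 2 * int (\<Sum>X) + int (card X)"
    unfolding expand square_A square_B unfolding sum card by simp
qed

definition beta_number :: "nat list \<Rightarrow> nat \<Rightarrow> nat" where
  "beta_number lam i = lam ! i + (length lam - 1 - i)"

lemma degseq_eq_image: "degseq lam = beta_number lam ` {..<length lam}"
  unfolding degseq_def beta_number_def by blast

lemma finite_degseq [simp]: "finite (degseq lam)"
  by (simp add: degseq_eq_image)

lemma beta_number_strict_antimono:
  assumes "is_partition lam" "i < j" "j < length lam"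
  shows "beta_number lam j < beta_number lam i"
proof -
  have "lam ! j \<le> lam ! i"
    using assms sorted_wrt_nth_less[of "(\<ge>)" lam i j] unfolding is_partition_def by simp
  then show ?thesis
    using assms(2,3) unfolding beta_number_def by linarith
qed

lemma inj_on_beta_number:
  assumes "is_partition lam"
  shows "inj_on (beta_number lam) {..<length lam}"
  by (rule inj_onI)
    (metis beta_number_strict_antimono[OF assms] lessThan_iff linorder_neqE_nat less_irrefl)

lemma card_degseq: "is_partition lam \<Longrightarrow> card (degseq lam) = length lam"
  by (simp add: degseq_eq_image card_image inj_on_beta_number)

lemma sum_degseq:
  assumes "is_partition lam"
  shows "2 * \<Sum>(degseq lam) + length lam = 2 * sum_list lam + length lam * length lam"
proof -
  let ?r = "length lam"
  have "\<Sum>(degseq lam) = (\<Sum>i<?r. beta_number lam i)"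
    unfolding degseq_eq_image by (simp add: sum.reindex[OF inj_on_beta_number[OF assms]])
  also have "\<dots> = (\<Sum>i<?r. lam ! i) + (\<Sum>i<?r. ?r - 1 - i)"
    unfolding beta_number_def by (rule sum.distrib)
  also have "(\<Sum>i<?r. ?r - 1 - i) = (\<Sum>i<?r. i)"
    using sum.nat_diff_reindex[of "\<lambda>i. i" ?r] by simp
  also have "(\<Sum>i<?r. lam ! i) = sum_list lam"
    by (simp add: sum_list_sum_nth atLeast0LessThan)
  finally show ?thesis
    using double_sum_lessThan_id[of ?r] by linarith
qed

lemma beta_set_partition:
  assumes "finite Y"
  obtains lam where "is_partition lam" "length lam = card Y" "degseq lam = Y"
proof -
  obtain s where s: "sorted_wrt (<) s" "set s = Y" "length s = card Y"
    using finite_set_strict_sorted[OF assms] by blast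
  let ?r = "card Y"
  define lam where "lam = map (\<lambda>i. s ! (?r - 1 - i) - (?r - 1 - i)) [0..<?r]"
  have gap: "s ! i + (j - i) \<le> s ! j" if "i \<le> j" "j < ?r" for i j
    using sorted_wrt_less_nth_gap[OF s(1) that(1)] s(3) that(2) by simp
  have len: "length lam = ?r"
    by (simp add: lam_def)
  have nth: "lam ! i = s ! (?r - 1 - i) - (?r - 1 - i)" if "i < ?r" for i
    using that by (simp add: lam_def)
  have lower: "?r - 1 - i \<le> s ! (?r - 1 - i)" if "i < ?r" for i
    using gap[of 0 "?r - 1 - i"] that by simp
  have beta: "lam ! i + (?r - 1 - i) = s ! (?r - 1 - i)" if "i < ?r" for i
    using nth[OF that] lower[OF that] by simp
  have "is_partition lam"
    unfolding is_partition_def sorted_wrt_iff_nth_less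
  proof (intro allI impI)
    fix i j assume ij: "i < j" "j < length lam"
    define a b where "a = ?r - 1 - j" and "b = ?r - 1 - i"
    have "a < b" "b < ?r"
      using ij len by (auto simp: a_def b_def)
    then have "s ! a + (b - a) \<le> s ! b" "a \<le> s ! a"
      using gap[of a b] lower[of j] ij len by (simp_all add: a_def)
    then have "s ! a - a \<le> s ! b - b"
      using \<open>a < b\<close> by linarith
    then show "lam ! j \<le> lam ! i"
      using nth[of i] nth[of j] ij len by (simp add: a_def b_def)
  qed
  moreover have "degseq lam = Y"
  proof -
    have "degseq lam = (\<lambda>i. s ! (?r - 1 - i)) ` {..<?r}"
      unfolding degseq_eq_image beta_number_def len using beta by simp
    also have "\<dots> = (\<lambda>j. s ! j) ` {..<?r}"
    proof -
      have "(\<lambda>i. ?r - 1 - i) ` {..<?r} = {..<?r}"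
        by (rule endo_inj_surj) (auto simp: inj_on_def)
      then show ?thesis
        by (metis image_image)
    qed
    also have "\<dots> = Y"
      using s(2,3) by (auto simp: in_set_conv_nth)
    finally show ?thesis .
  qed
  ultimately show ?thesis
    using that len by blast
qed

lemma charge_degseq_size:
  assumes "is_partition lam"
  shows "charge (degseq lam) * (charge (degseq lam) + 1) \<le> 2 * int (sum_list lam)"
    and "\<forall>x\<in>degseq lam. 2 \<le> x \<longrightarrow> x - 2 \<in> degseq lam \<Longrightarrow>
      charge (degseq lam) * (charge (degseq lam) + 1) = 2 * int (sum_list lam)"
proof -
  have size: "2 * int (\<Sum>(degseq lam)) + int (length lam) =
      2 * int (sum_list lam) + int (length lam) ^ 2"
    using arg_cong[OF sum_degseq[OF assms], of int]
    by (simp only: of_nat_add of_nat_mult of_nat_numeral power2_eq_square)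
  note card = card_degseq[OF assms]
  show "charge (degseq lam) * (charge (degseq lam) + 1) \<le> 2 * int (sum_list lam)"
    using charge_card_sum_bound(1)[OF finite_degseq, of lam, unfolded card] size by linarith
  show "charge (degseq lam) * (charge (degseq lam) + 1) = 2 * int (sum_list lam)"
    if "\<forall>x\<in>degseq lam. 2 \<le> x \<longrightarrow> x - 2 \<in> degseq lam"
    using charge_card_sum_bound(2)[OF finite_degseq that, unfolded card] size by linarith
qed

lemma degseq_closed_if_no_remove_hook:
  assumes "is_partition lam" "\<nexists>mu. remove_hook q lam mu"
  shows "\<forall>x\<in>degseq lam. q \<le> x \<longrightarrow> x - q \<in> degseq lam"
proof (intro ballI impI, rule ccontr)
  fix x assume x: "x \<in> degseq lam" "q \<le> x" "x - q \<notin> degseq lam"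
  let ?Y = "insert (x - q) (degseq lam - {x})"
  have "finite ?Y"
    by simp
  then obtain mu where mu: "is_partition mu" "length mu = card ?Y" "degseq mu = ?Y"
    by (rule beta_set_partition)
  have "card ?Y = Suc (card (degseq lam - {x}))"
    using x(3) by simp
  also have "\<dots> = length lam"
    using card_Suc_Diff1[OF finite_degseq x(1)] card_degseq[OF assms(1)] by simp
  finally have "remove_hook q lam mu"
    unfolding remove_hook_def using mu x by auto
  then show False
    using assms(2) by blast
qed

lemma remove_hook_size:
  assumes "remove_hook q lam mu" "is_partition lam"
  shows "sum_list mu + q = sum_list lam"
proof -
  obtain a where a: "a \<in> degseq lam" "q \<le> a" "a - q \<notin> degseq lam"
    and mu: "is_partition mu" "length mu = length lam"
      "degseq mu = insert (a - q) (degseq lam - {a})"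
    using assms(1) unfolding remove_hook_def by blast
  have "\<Sum>(degseq mu) = (a - q) + \<Sum>(degseq lam - {a})"
    unfolding mu(3) using a(3) by simp
  moreover have "\<Sum>(degseq lam) = a + \<Sum>(degseq lam - {a})"
    by (rule sum.remove[OF finite_degseq a(1)])
  ultimately have "\<Sum>(degseq mu) + q = \<Sum>(degseq lam)"
    using a(2) by linarith
  then show ?thesis
    using sum_degseq[OF assms(2)] sum_degseq[OF mu(1)] unfolding mu(2) by linarith
qed

lemma remove_hook_charge:
  assumes "remove_hook q lam mu"
  shows "\<bar>charge (degseq mu) - charge (degseq lam)\<bar> \<le> 2"
    and "even q \<Longrightarrow> charge (degseq mu) = charge (degseq lam)"
proof -
  obtain a where a: "a \<in> degseq lam" "q \<le> a" "a - q \<notin> degseq lam"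
    and mu: "degseq mu = insert (a - q) (degseq lam - {a})"
    using assms unfolding remove_hook_def by blast
  note replace = charge_replace[OF finite_degseq a(1,3), folded mu]
  show "\<bar>charge (degseq mu) - charge (degseq lam)\<bar> \<le> 2"
    unfolding replace by simp
  show "even q \<Longrightarrow> charge (degseq mu) = charge (degseq lam)"
    unfolding replace using a(2) by simp
qed

lemma remove_hooks_funpow:
  assumes "(remove_hook q ^^ k) lam mu" "is_partition lam"
  shows "is_partition mu \<and> sum_list mu + k * q = sum_list lam \<and>
    \<bar>charge (degseq mu) - charge (degseq lam)\<bar> \<le> 2 * int k"
  using assms(1)
proof (induction k arbitrary: mu)
  case 0
  then show ?case
    using assms(2) by simp
next
  case (Suc k)
  then obtain nu where nu: "(remove_hook q ^^ k) lam nu" "remove_hook q nu mu"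
    by auto
  have "is_partition mu"
    using nu(2) unfolding remove_hook_def by blast
  moreover have "sum_list mu + Suc k * q = sum_list lam"
    using Suc.IH[OF nu(1)] remove_hook_size[OF nu(2)] by simp
  moreover have "\<bar>charge (degseq mu) - charge (degseq lam)\<bar> \<le> 2 * int (Suc k)"
    using Suc.IH[OF nu(1)] remove_hook_charge(1)[OF nu(2)]
      abs_triangle_ineq[of "charge (degseq mu) - charge (degseq nu)"
        "charge (degseq nu) - charge (degseq lam)"]
    by simp
  ultimately show ?case
    by blast
qed

lemma remove_even_hooks_rtranclp:
  assumes "(remove_hook q)\<^sup>*\<^sup>* lam mu" "is_partition lam" "even q"
  shows "is_partition mu \<and> charge (degseq mu) = charge (degseq lam)"
  using assms(1)
proof (induction rule: rtranclp_induct)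
  case base
  then show ?case
    using assms(2) by simp
next
  case (step nu mu)
  moreover have "is_partition mu"
    using step(2) unfolding remove_hook_def by blast
  ultimately show ?case
    using remove_hook_charge(2)[OF step(2) assms(3)] by simp
qed

lemma weight_attained:
  assumes "0 < q" "is_partition lam"
  shows "\<exists>mu. (remove_hook q ^^ weight q lam) lam mu"
  unfolding weight_def
proof (rule GreatestI_nat[where b = "sum_list lam"])
  show "\<exists>mu. (remove_hook q ^^ 0) lam mu"
    by simp
  fix k assume "\<exists>mu. (remove_hook q ^^ k) lam mu"
  then obtain mu where "sum_list mu + k * q = sum_list lam"
    using remove_hooks_funpow assms(2) by blast
  moreover have "k \<le> k * q"
    using assms(1) by simp
  ultimately show "k \<le> sum_list lam"
    by linarith
qed

lemma triangular_lower_bound: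
  fixes k k0 m d :: int
  assumes "k0 * (k0 + 1) = m * (m + 1)" "\<bar>k - k0\<bar> \<le> d" "d \<le> m + 1"
  shows "(m - d) * (m - d + 1) \<le> k * (k + 1)"
proof (cases "d = m + 1")
  case True
  have "0 \<le> k * (k + 1)"
    by (auto simp: zero_le_mult_iff)
  then show ?thesis
    using True by simp
next
  case False
  have mono: "i * (i + 1) \<le> j * (j + 1)" if "0 \<le> i" "i \<le> j" for i j :: int
    using that by (simp add: mult_mono)
  have "(k0 - m) * (k0 + m + 1) = 0"
    using assms(1) by (simp add: algebra_simps)
  then have "k0 = m \<or> k0 = - m - 1"
    by auto
  then have "m - d \<le> k \<or> m - d \<le> -1 - k"
    using assms(2) by auto
  moreover have "0 \<le> m - d"
    using False assms(3) by simp
  moreover have "(-1 - k) * (-1 - k + 1) = k * (k + 1)"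
    by (simp add: algebra_simps)
  ultimately show ?thesis
    using mono by metis
qed

lemma double_choose_two: "2 * ((m + 1) choose 2) = (m + 1) * m"
  by (induction m) (auto simp: numeral_2_eq_2)

theorem mainTheorem9:
  fixes m p t n :: nat and lam :: "nat list"
  assumes "m \<ge> 1" and "prime p"
    and "is_partition lam" and "sum_list lam = n"
    and "two_core_size lam ((m + 1) choose 2)"
    and "weight p lam = t" and "t \<le> (m + 1) div 2"
  shows "int n \<ge> int t * int p - int t * (2 * (int m - int t) + 1) + int ((m + 1) choose 2)"
proof -
  obtain mu where "(remove_hook p ^^ t) lam mu"
    using weight_attained[OF prime_gt_0_nat[OF assms(2)] assms(3)] assms(6) by blast
  then have mu: "is_partition mu" "sum_list mu + t * p = n"
      "\<bar>charge (degseq mu) - charge (degseq lam)\<bar> \<le> 2 * int t"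
    using remove_hooks_funpow assms(3,4) by blast+
  obtain core where core: "(remove_hook 2)\<^sup>*\<^sup>* lam core" "\<nexists>nu. remove_hook 2 core nu"
      "sum_list core = (m + 1) choose 2"
    using assms(5) unfolding two_core_size_def by blast
  have "is_partition core" "charge (degseq core) = charge (degseq lam)"
    using remove_even_hooks_rtranclp[OF core(1) assms(3)] by auto
  then have "charge (degseq lam) * (charge (degseq lam) + 1) = int m * (int m + 1)"
    using charge_degseq_size(2)[OF _ degseq_closed_if_no_remove_hook[OF _ core(2)]]
      arg_cong[OF double_choose_two[of m], of int] core(3)
    by (simp add: algebra_simps)
  then have "(int m - 2 * int t) * (int m - 2 * int t + 1) \<le> 2 * int (sum_list mu)"
    using triangular_lower_bound[OF _ mu(3)] charge_degseq_size(1)[OF mu(1)] assms(7)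
    by fastforce
  moreover have "(int m - 2 * int t) * (int m - 2 * int t + 1) =
      2 * int ((m + 1) choose 2) - 2 * (int t * (2 * (int m - int t) + 1))"
    using arg_cong[OF double_choose_two[of m], of int] by (simp add: algebra_simps)
  moreover have "int n = int (sum_list mu) + int t * int p"
    using mu(2) by auto
  ultimately show ?thesis
    by linarith
qed

end
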